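(* Let $\mu$ be a probability measure on $\mathbb{R}$ whose support is not included in $(-\infty,0)$, and write $\mu_n=\mu(\{n\})$ for integers $n\ge0$. Assume $(\mu_n)_{n\ge0}$ is completely monotone, so that $\mu_n=\int_0^1t^n\,\nu(dt)$, $n\ge0$, for a unique finite measure $\nu$ on $[0,1]$, and assume the support of $\nu$ contains a decreasing sequence $(c_n)$ with $\sum_n(-\ln c_n)^{-1}=\infty$. Then the restrictions of $\mu$ and $\mu*\mu$ to $[0,\infty)$ determine whether the support of $\mu$ is included in $\mathbb{Z}$. If the support of $\mu$ is included in $\mathbb{Z}$, then $\mu$ is determined by the restrictions of $\mu$ and $\mu*\mu$ to $[0,\infty)$ (any probability measure $\mu_1$ on $\mathbb{R}$ with $\mu_1=\mu$ and $\mu_1*\mu_1=\mu*\mu$ on $[0,\infty)$ equals $\mu$); in particular $\mu\in\mathscr{C}$.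
   Context: A sequence $(a_k)_{k\ge0}$ of nonnegative reals is completely monotone if $\Delta^na_k\ge0$ for all $k\ge0$, $n\ge1$, where $\Delta^0a=a$ and $\Delta^na_k=\Delta^{n-1}a_k-\Delta^{n-1}a_{k+1}$. $\mathscr{C}$ is the set of probability measures $\mu$ on $\mathbb{R}$ such that every probability measure $\mu_1$ with $\mu_1^{*n}=\mu^{*n}$ on $[0,\infty)$ for all $n\ge1$ ($*n$ = $n$-fold convolution power) equals $\mu$. *)

theory Defs
  imports "HOL-Probability.Probability"
begin

fun fdiff :: "nat \<Rightarrow> (nat \<Rightarrow> real) \<Rightarrow> nat \<Rightarrow> real" where
  "fdiff 0 a k = a k"
| "fdiff (Suc n) a k = fdiff n a k - fdiff n a (Suc k)"

definition completely_monotone :: "(nat \<Rightarrow> real) \<Rightarrow> bool" where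
  "completely_monotone a \<longleftrightarrow> (\<forall>k. a k \<ge> 0) \<and> (\<forall>n\<ge>1. \<forall>k. fdiff n a k \<ge> 0)"

definition msupp :: "real measure \<Rightarrow> real set" where
  "msupp M = {x. \<forall>e>0. emeasure M (ball x e) > 0}"

definition real_prob :: "real measure \<Rightarrow> bool" where
  "real_prob M \<longleftrightarrow> prob_space M \<and> sets M = sets borel"

text \<open>n-fold convolution power (n \<ge> 1).\<close>
fun conv_pow :: "real measure \<Rightarrow> nat \<Rightarrow> real measure" where
  "conv_pow M 0 = M"
| "conv_pow M (Suc 0) = M"
| "conv_pow M (Suc (Suc n)) = convolution M (conv_pow M (Suc n))"

definition eq_on_nonneg :: "real measure \<Rightarrow> real measure \<Rightarrow> bool" where
  "eq_on_nonneg M N \<longleftrightarrow> (\<forall>A\<in>sets borel. A \<subseteq> {0..} \<longrightarrow> emeasure M A = emeasure N A)"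

definition classC :: "real measure set" where
  "classC = {\<mu>. real_prob \<mu> \<and>
     (\<forall>\<mu>1. real_prob \<mu>1 \<and> (\<forall>n\<ge>1. eq_on_nonneg (conv_pow \<mu>1 n) (conv_pow \<mu> n)) \<longrightarrow> \<mu>1 = \<mu>)}"

end

theory Submission
  imports Defs "HOL-Complex_Analysis.Complex_Analysis"
begin

text \<open>
  Suppose \<mu> is concentrated on \<int>, with point masses \<open>p n = \<mu>{n}\<close>, and \<mu>1 agrees with \<mu> on
  [0,\<infinity>) while \<mu>1 * \<mu>1 agrees with \<mu> * \<mu> there. Split both factors of a convolution at 0.
  For a Borel set \<open>B \<subseteq> [0,\<infinity>)\<close> the product of the negative parts does not reach B, and the
  product of the nonnegative parts depends only on \<mu>; hence the mixed terms agree: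
  \<open>\<Sum>\<^sub>k p k \<mu>1((B - k) \<inter> (-\<infinity>,0)) = \<Sum>\<^sub>k p k \<mu>((B - k) \<inter> (-\<infinity>,0))\<close>.
  Taking \<open>B = A + m\<close> with \<open>A \<subseteq> [0,1)\<close> and writing \<open>D j\<close> for the difference of the two masses of
  \<open>(A - j) \<inter> (-\<infinity>,0)\<close>, this says \<open>\<Sum>\<^sub>j p (m + j) D j = 0\<close> for every m. Since \<open>p n\<close> is the
  n-th moment of \<nu>, the bounded continuous function \<open>\<Sum>\<^sub>j D j t\<^sup>j\<close> is orthogonal to all
  polynomials in \<open>L\<^sup>2(\<nu>)\<close>, so by Weierstrass it vanishes on the support of \<nu>, in particular
  at every \<open>c n\<close>. These zeros accumulate inside the unit disc, so by the identity theorem all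
  \<open>D j\<close> vanish: \<mu>1 and \<mu> also agree on (-\<infinity>,0). Applied with the roles of \<mu> and \<mu>1
  exchanged, this shows that \<mu>1 is concentrated on \<int> exactly when \<mu> is.
\<close>

section \<open>Power series with absolutely summable coefficients\<close>

lemma abs_mult_power_le:
  fixes a x :: real
  assumes "\<bar>x\<bar> \<le> 1"
  shows "\<bar>a * x ^ n\<bar> \<le> \<bar>a\<bar>"
  using assms by (simp add: abs_mult power_abs mult_left_le power_le_one)

lemma summable_powser_abs_summable:
  fixes d :: "nat \<Rightarrow> real"
  assumes "summable (\<lambda>j. \<bar>d j\<bar>)" and "\<bar>t\<bar> \<le> 1"
  shows "summable (\<lambda>j. d j * t ^ j)"
  by (rule summable_comparison_test'[OF assms(1), of 0]) (simp add: abs_mult_power_le assms(2))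

lemma continuous_on_powser_abs_summable:
  fixes d :: "nat \<Rightarrow> real"
  assumes "summable (\<lambda>j. \<bar>d j\<bar>)"
  shows "continuous_on {-1..1} (\<lambda>t. \<Sum>j. d j * t ^ j)"
proof (rule uniform_limit_theorem)
  show "uniform_limit {-1..1} (\<lambda>n t. \<Sum>j<n. d j * t ^ j) (\<lambda>t. \<Sum>j. d j * t ^ j) sequentially"
  proof (rule Weierstrass_m_test[OF _ assms])
    fix j and t :: real assume "t \<in> {-1..1}"
    then have "\<bar>t\<bar> \<le> 1" by auto
    then show "norm (d j * t ^ j) \<le> \<bar>d j\<bar>" by (simp add: abs_mult_power_le)
  qed
  show "\<forall>\<^sub>F n in sequentially. continuous_on {-1..1} (\<lambda>t. \<Sum>j<n. d j * t ^ j)"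
    by (intro always_eventually allI continuous_intros)
qed simp

lemma powser_coeffs_eq_0_if_sums_0:
  fixes a :: "nat \<Rightarrow> 'a::{real_normed_field,banach}"
  assumes r: "0 < r" and sums0: "\<And>z. norm z < r \<Longrightarrow> (\<lambda>j. a j * z ^ j) sums 0"
  shows "a k = 0"
proof (rule ccontr)
  assume ak: "a k \<noteq> 0"
  show False
  proof (cases k)
    case 0
    then show False using sums_unique[OF sums0[of 0]] r ak by simp
  next
    case Suc
    have sums0': "(\<lambda>j. a j * (z - 0) ^ j) sums 0" if "norm (z - 0) < r" for z
      using sums0 that by simp
    have "0 < k" using Suc by simp
    show False
    proof (rule powser_0_nonzero[where a = a and f = "\<lambda>_. 0" and \<xi> = 0 and m = k, OF r sums0' refl ak \<open>0 < k\<close>])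
      fix s :: real assume "0 < s" and "\<And>z::'a. z \<in> cball 0 s - {0} \<Longrightarrow> (0::'a) \<noteq> 0"
      moreover have "of_real s \<in> cball (0::'a) s - {0}" using \<open>0 < s\<close> by simp
      ultimately show False by blast
    qed
  qed
qed

lemma islimpt_of_real_range:
  fixes c :: "nat \<Rightarrow> real"
  assumes lim: "c \<longlonglongrightarrow> L" and c_ne: "\<And>n. c n \<noteq> L"
  shows "(of_real L :: 'a::real_normed_div_algebra) islimpt of_real ` range c"
proof (unfold islimpt_approachable, intro allI impI)
  fix e :: real assume "0 < e"
  then obtain n where "dist (c n) L < e" using lim by (auto simp: lim_sequentially)
  then show "\<exists>z\<in>of_real ` range c. z \<noteq> (of_real L :: 'a) \<and> dist z (of_real L) < e"
    using c_ne[of n] by (intro bexI[of _ "of_real (c n)"]) (auto simp: dist_of_real)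
qed

lemma powser_coeffs_eq_0_if_zeros_accumulate:
  fixes d c :: "nat \<Rightarrow> real"
  assumes sd: "summable (\<lambda>j. \<bar>d j\<bar>)"
    and zeros: "\<And>n. (\<Sum>j. d j * c n ^ j) = 0"
    and lim: "c \<longlonglongrightarrow> L" and c_ne: "\<And>n. c n \<noteq> L"
    and c_in: "\<And>n. \<bar>c n\<bar> < 1" and L: "\<bar>L\<bar> < 1"
  shows "d k = 0"
proof -
  define F where "F z = (\<Sum>j. complex_of_real (d j) * z ^ j)" for z
  have F_sums: "(\<lambda>j. complex_of_real (d j) * z ^ j) sums F z" if "norm z \<le> 1" for z
    unfolding F_def
  proof (rule summable_sums, rule summable_comparison_test'[OF sd, of 0])
    show "norm (complex_of_real (d j) * z ^ j) \<le> \<bar>d j\<bar>" for j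
      using that by (simp add: norm_mult norm_power mult_left_le power_le_one)
  qed
  have F_real: "F (complex_of_real t) = complex_of_real (\<Sum>j. d j * t ^ j)" if "\<bar>t\<bar> \<le> 1" for t
  proof -
    from sums_of_real[where 'a = complex, OF summable_sums[OF summable_powser_abs_summable[OF sd that]]]
    have "(\<lambda>j. complex_of_real (d j) * complex_of_real t ^ j) sums complex_of_real (\<Sum>j. d j * t ^ j)"
      by simp
    then show ?thesis using F_sums[of "complex_of_real t"] that sums_unique2 by simp
  qed
  have hol: "F holomorphic_on ball 0 1"
  proof (rule power_series_holomorphic)
    fix w :: complex assume "w \<in> ball 0 1"
    then show "(\<lambda>j. complex_of_real (d j) * (w - 0) ^ j) sums F w" using F_sums[of w] by simp
  qed
  have F0: "F z = 0" if "z \<in> ball 0 1" for z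
  proof (rule analytic_continuation[OF hol open_ball connected_ball _ _ islimpt_of_real_range[OF lim c_ne] _ that])
    show "complex_of_real ` range c \<subseteq> ball 0 1" using c_in by auto
    show "complex_of_real L \<in> ball 0 1" using L by simp
    show "F z = 0" if "z \<in> complex_of_real ` range c" for z
      using that zeros F_real c_in by (auto simp: less_imp_le)
  qed
  have "complex_of_real (d k) = 0"
  proof (rule powser_coeffs_eq_0_if_sums_0[OF zero_less_one])
    show "(\<lambda>j. complex_of_real (d j) * z ^ j) sums 0" if "norm z < 1" for z
      using F_sums[of z] F0[of z] that by simp
  qed
  then show ?thesis by simp
qed

section \<open>Functions orthogonal to all powers\<close>

lemma integrable_continuous_on_compact_carrier:
  fixes f :: "real \<Rightarrow> real"
  assumes "finite_measure \<nu>" "sets \<nu> = sets borel"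
    and "compact K" "AE t in \<nu>. t \<in> K"
    and "continuous_on K f" "f \<in> borel_measurable borel"
  shows "integrable \<nu> f"
proof -
  interpret finite_measure \<nu> by fact
  obtain B where B: "\<And>t. t \<in> K \<Longrightarrow> \<bar>f t\<bar> \<le> B"
    using compact_imp_bounded[OF compact_continuous_image[OF assms(5,3)]]
    by (auto simp: bounded_iff)
  show ?thesis
  proof (rule integrable_const_bound[where B = B])
    show "AE t in \<nu>. norm (f t) \<le> B" using assms(4) by eventually_elim (simp add: B)
    show "f \<in> borel_measurable \<nu>" using assms(6) by (simp only: measurable_cong_sets[OF assms(2) refl])
  qed
qed

lemma integral_poly_mult_eq_0_if_orthogonal_to_powers:
  fixes g q :: "real \<Rightarrow> real"
  assumes int: "\<And>i. integrable \<nu> (\<lambda>t. t ^ i * g t)"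
    and orth: "\<And>m. (\<integral>t. t ^ m * g t \<partial>\<nu>) = 0"
    and q: "real_polynomial_function q"
  shows "(\<integral>t. q t * g t \<partial>\<nu>) = 0"
proof -
  obtain a N where q: "q = (\<lambda>t. \<Sum>i\<le>N. a i * t ^ i)"
    using q unfolding real_polynomial_function_iff_sum by blast
  have "(\<integral>t. q t * g t \<partial>\<nu>) = (\<integral>t. (\<Sum>i\<le>N. a i * (t ^ i * g t)) \<partial>\<nu>)"
    unfolding q sum_distrib_right by (simp only: mult.assoc)
  also have "\<dots> = (\<Sum>i\<le>N. a i * (\<integral>t. t ^ i * g t \<partial>\<nu>))"
    using int by simp
  finally show ?thesis using orth by simp
qed

lemma integral_square_le_if_orthogonal_to_powers:
  fixes g q :: "real \<Rightarrow> real"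
  assumes fin: "finite_measure \<nu>" and sets: "sets \<nu> = sets borel"
    and K: "compact K" "AE t in \<nu>. t \<in> K"
    and g: "continuous_on K g" "g \<in> borel_measurable borel"
    and orth: "\<And>m. (\<integral>t. t ^ m * g t \<partial>\<nu>) = 0"
    and B: "\<And>t. t \<in> K \<Longrightarrow> \<bar>g t\<bar> \<le> B"
    and q: "real_polynomial_function q" and approx: "\<And>t. t \<in> K \<Longrightarrow> \<bar>g t - q t\<bar> \<le> e"
  shows "(\<integral>t. (g t)\<^sup>2 \<partial>\<nu>) \<le> e * B * measure \<nu> (space \<nu>)"
proof -
  interpret finite_measure \<nu> by (rule fin)
  note integrable = integrable_continuous_on_compact_carrier[OF fin sets K]
  have q_cont: "continuous_on UNIV q"
    by (rule continuous_on_polymonial_function) (use q in \<open>simp add: real_polynomial_function_eq\<close>)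
  note cont = g(1) continuous_on_subset[OF q_cont subset_UNIV]
  have [measurable]: "g \<in> borel_measurable borel" "q \<in> borel_measurable borel"
    using g(2) q_cont by (simp_all add: borel_measurable_continuous_onI)
  have int_pow: "integrable \<nu> (\<lambda>t. t ^ i * g t)" for i
    by (rule integrable) (intro continuous_intros cont, measurable)
  have int_sq: "integrable \<nu> (\<lambda>t. (g t)\<^sup>2)"
    by (rule integrable) (intro continuous_intros cont, measurable)
  have int_qg: "integrable \<nu> (\<lambda>t. q t * g t)"
    by (rule integrable) (intro continuous_intros cont, measurable)
  have int_diff: "integrable \<nu> (\<lambda>t. (g t - q t) * g t)"
    by (rule integrable) (intro continuous_intros cont, measurable)
  have "(\<integral>t. (g t)\<^sup>2 \<partial>\<nu>) = (\<integral>t. (g t)\<^sup>2 \<partial>\<nu>) - (\<integral>t. q t * g t \<partial>\<nu>)"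
    using integral_poly_mult_eq_0_if_orthogonal_to_powers[OF int_pow orth q] by simp
  also have "\<dots> = (\<integral>t. (g t - q t) * g t \<partial>\<nu>)"
    using Bochner_Integration.integral_diff[OF int_sq int_qg] by (simp add: power2_eq_square left_diff_distrib)
  also have "\<dots> \<le> (\<integral>t. e * B \<partial>\<nu>)"
  proof (rule integral_mono_AE[OF int_diff])
    show "AE t in \<nu>. (g t - q t) * g t \<le> e * B"
      using K(2)
    proof eventually_elim
      case (elim t)
      have "(g t - q t) * g t \<le> \<bar>g t - q t\<bar> * \<bar>g t\<bar>" by (simp add: abs_mult[symmetric])
      also have "\<dots> \<le> e * B" using approx[OF elim] B[OF elim] by (intro mult_mono) auto
      finally show ?case .
    qed
  qed simp
  finally show ?thesis by (simp add: ac_simps)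
qed

lemma integral_square_eq_0_if_orthogonal_to_powers:
  fixes g :: "real \<Rightarrow> real"
  assumes fin: "finite_measure \<nu>" and sets: "sets \<nu> = sets borel"
    and K: "compact K" "AE t in \<nu>. t \<in> K"
    and g: "continuous_on K g" "g \<in> borel_measurable borel"
    and orth: "\<And>m. (\<integral>t. t ^ m * g t \<partial>\<nu>) = 0"
  shows "(\<integral>t. (g t)\<^sup>2 \<partial>\<nu>) = 0"
proof -
  obtain B where B_pos: "0 < B" and B: "\<And>t. t \<in> K \<Longrightarrow> \<bar>g t\<bar> \<le> B"
    using compact_imp_bounded[OF compact_continuous_image[OF g(1) K(1)]]
    by (auto simp: bounded_pos)
  have le_eps: "(\<integral>t. (g t)\<^sup>2 \<partial>\<nu>) \<le> \<epsilon>" if "0 < \<epsilon>" for \<epsilon>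
  proof -
    define M where "M = B * measure \<nu> (space \<nu>)"
    define e where "e = \<epsilon> / (M + 1)"
    have M: "0 \<le> M" unfolding M_def using B_pos by simp
    then have "0 < e" unfolding e_def using that by simp
    then obtain q where q: "real_polynomial_function q" "\<And>t. t \<in> K \<Longrightarrow> \<bar>g t - q t\<bar> < e"
      using Stone_Weierstrass_real_polynomial_function[OF K(1) g(1)] by blast
    have "(\<integral>t. (g t)\<^sup>2 \<partial>\<nu>) \<le> e * B * measure \<nu> (space \<nu>)"
      by (rule integral_square_le_if_orthogonal_to_powers[OF assms B q(1) less_imp_le[OF q(2)]])
    also have "\<dots> = \<epsilon> * (M / (M + 1))" by (simp add: e_def M_def)
    also have "\<dots> \<le> \<epsilon>" using M that by (intro mult_left_le) simp_all
    finally show ?thesis .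
  qed
  have "(\<integral>t. (g t)\<^sup>2 \<partial>\<nu>) \<le> 0"
    by (rule field_le_epsilon) (simp add: le_eps)
  moreover have "0 \<le> (\<integral>t. (g t)\<^sup>2 \<partial>\<nu>)" by (rule integral_nonneg_AE) simp
  ultimately show ?thesis by simp
qed

lemma AE_eq_0_if_orthogonal_to_powers:
  fixes g :: "real \<Rightarrow> real"
  assumes fin: "finite_measure \<nu>" and sets: "sets \<nu> = sets borel"
    and K: "compact K" "AE t in \<nu>. t \<in> K"
    and g: "continuous_on K g" "g \<in> borel_measurable borel"
    and orth: "\<And>m. (\<integral>t. t ^ m * g t \<partial>\<nu>) = 0"
  shows "AE t in \<nu>. g t = 0"
proof -
  have "integrable \<nu> (\<lambda>t. (g t)\<^sup>2)"
    using g by (intro integrable_continuous_on_compact_carrier[OF fin sets K] continuous_intros) auto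
  then have "AE t in \<nu>. (g t)\<^sup>2 = 0"
    using integral_square_eq_0_if_orthogonal_to_powers[OF assms]
    by (subst (asm) integral_nonneg_eq_0_iff_AE) auto
  then show ?thesis by simp
qed

lemma zero_on_msupp_if_AE_eq_0:
  fixes g :: "real \<Rightarrow> real"
  assumes sets: "sets \<nu> = sets borel"
    and K: "AE t in \<nu>. t \<in> K" and g: "continuous_on K g" and g0: "AE t in \<nu>. g t = 0"
    and x: "x \<in> msupp \<nu>" "x \<in> K"
  shows "g x = 0"
proof (rule ccontr)
  assume "g x \<noteq> 0"
  then obtain r where r: "0 < r" "\<And>t. t \<in> K \<Longrightarrow> dist t x < r \<Longrightarrow> dist (g t) (g x) < \<bar>g x\<bar>"
    using g x(2) unfolding continuous_on_iff by (meson zero_less_abs_iff)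
  have "AE t in \<nu>. t \<notin> ball x r"
    using K g0 by eventually_elim (use r(2) in \<open>fastforce simp: dist_real_def\<close>)
  then have "emeasure \<nu> (ball x r) = 0"
    by (subst (asm) AE_iff_measurable[of "ball x r"]) (auto simp: sets sets_eq_imp_space_eq[OF sets])
  then show False using x(1) r(1) unfolding msupp_def by auto
qed

lemma integral_power_mult_powser:
  fixes d :: "nat \<Rightarrow> real"
  assumes fin: "finite_measure \<nu>" and sets: "sets \<nu> = sets borel"
    and unit: "AE t in \<nu>. \<bar>t\<bar> \<le> 1" and sd: "summable (\<lambda>j. \<bar>d j\<bar>)"
  shows "(\<integral>t. t ^ m * (\<Sum>j. d j * t ^ j) \<partial>\<nu>) = (\<Sum>j. d j * (\<integral>t. t ^ (m + j) \<partial>\<nu>))"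
proof -
  interpret finite_measure \<nu> by (rule fin)
  have [measurable_cong]: "sets \<nu> = sets borel" by (rule sets)
  have bound: "AE t in \<nu>. \<bar>d j * t ^ (m + j)\<bar> \<le> \<bar>d j\<bar>" for j
    using unit by eventually_elim (rule abs_mult_power_le)
  have int: "integrable \<nu> (\<lambda>t. d j * t ^ (m + j))" for j
    by (rule integrable_const_bound[where B = "\<bar>d j\<bar>"]) (use bound in auto)
  have "(\<integral>t. t ^ m * (\<Sum>j. d j * t ^ j) \<partial>\<nu>) = (\<integral>t. (\<Sum>j. d j * t ^ (m + j)) \<partial>\<nu>)"
  proof (rule integral_cong_AE)
    show "AE t in \<nu>. t ^ m * (\<Sum>j. d j * t ^ j) = (\<Sum>j. d j * t ^ (m + j))"
      using unit
    proof eventually_elim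
      case (elim t)
      from summable_powser_abs_summable[OF sd elim] show ?case by (simp add: suminf_mult[symmetric] power_add ac_simps)
    qed
  qed measurable
  also have "\<dots> = (\<Sum>j. (\<integral>t. d j * t ^ (m + j) \<partial>\<nu>))"
  proof (rule integral_suminf[OF int])
    show "AE t in \<nu>. summable (\<lambda>j. norm (d j * t ^ (m + j)))"
      using AE_all_countable[THEN iffD2, OF allI[OF bound]]
      by eventually_elim (rule summable_comparison_test'[OF sd, of 0], auto)
    show "summable (\<lambda>j. \<integral>t. norm (d j * t ^ (m + j)) \<partial>\<nu>)"
    proof (rule summable_comparison_test'[OF summable_mult2[OF sd, of "measure \<nu> (space \<nu>)"], of 0])
      fix j
      have "(\<integral>t. norm (d j * t ^ (m + j)) \<partial>\<nu>) \<le> (\<integral>t. \<bar>d j\<bar> \<partial>\<nu>)"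
        by (rule integral_mono_AE) (use int[of j] bound[of j] in auto)
      then show "norm (\<integral>t. norm (d j * t ^ (m + j)) \<partial>\<nu>) \<le> \<bar>d j\<bar> * measure \<nu> (space \<nu>)"
        by (simp add: mult.commute)
    qed
  qed
  finally show ?thesis by simp
qed

lemma powser_coeffs_eq_0_if_moments_vanish:
  fixes \<nu> :: "real measure" and d c :: "nat \<Rightarrow> real"
  assumes fin: "finite_measure \<nu>" and sets: "sets \<nu> = sets borel"
    and unit: "AE t in \<nu>. t \<in> {0..1}"
    and sd: "summable (\<lambda>j. \<bar>d j\<bar>)"
    and mom: "\<And>m. (\<Sum>j. d j * (\<integral>t. t ^ (m + j) \<partial>\<nu>)) = 0"
    and c_supp: "\<And>n. c n \<in> msupp \<nu>" and c_dec: "\<And>n. c (Suc n) < c n"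
    and c_pos: "\<And>n. 0 < c n" and c_lt1: "\<And>n. c n < 1"
  shows "d k = 0"
proof -
  define G where "G t = (\<Sum>j. d j * t ^ j)" for t
  have G_cont: "continuous_on {0..1} G"
    unfolding G_def by (rule continuous_on_subset[OF continuous_on_powser_abs_summable[OF sd]]) auto
  have G_meas: "G \<in> borel_measurable borel" unfolding G_def by measurable
  have "AE t in \<nu>. \<bar>t\<bar> \<le> 1" using unit by eventually_elim auto
  then have "(\<integral>t. t ^ m * G t \<partial>\<nu>) = 0" for m
    unfolding G_def by (simp add: integral_power_mult_powser[OF fin sets _ sd] mom)
  then have "AE t in \<nu>. G t = 0"
    by (rule AE_eq_0_if_orthogonal_to_powers[OF fin sets compact_Icc unit G_cont G_meas])
  then have zeros: "G (c n) = 0" for n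
    by (rule zero_on_msupp_if_AE_eq_0[OF sets unit G_cont _ c_supp])
      (use c_pos[of n] c_lt1[of n] in simp)
  obtain L where L: "c \<longlonglongrightarrow> L" "\<And>n. L \<le> c n"
    using decseq_convergent[of c 0] c_dec c_pos by (metis decseq_SucI less_imp_le)
  show ?thesis
  proof (rule powser_coeffs_eq_0_if_zeros_accumulate[OF sd _ L(1)])
    show "(\<Sum>j. d j * c n ^ j) = 0" for n using zeros by (simp add: G_def)
    show "c n \<noteq> L" for n using L(2)[of "Suc n"] c_dec[of n] by simp
    show "\<bar>c n\<bar> < 1" for n using c_pos[of n] c_lt1[of n] by simp
    show "\<bar>L\<bar> < 1" using L(2)[of 0] c_lt1[of 0] LIMSEQ_le_const[OF L(1), of 0] c_pos less_imp_le
      by (metis abs_of_nonneg order.strict_trans1)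
  qed
qed

section \<open>Measures agreeing with a lattice measure on [0,\<infinity>)\<close>

lemma AE_in_msupp:
  assumes sets: "sets M = sets borel"
  shows "AE x in M. x \<in> msupp M"
proof -
  define F where "F = {ball x e | x e. 0 < e \<and> emeasure M (ball x e) = 0}"
  obtain F' where F': "F' \<subseteq> F" "countable F'" "\<Union>F' = \<Union>F"
    by (rule Lindelof[of F]) (auto simp: F_def)
  have "(\<Union>S\<in>F'. S) \<in> null_sets M"
    by (rule null_sets_UN'[OF F'(2)]) (use F'(1) sets in \<open>auto simp: F_def null_sets_def\<close>)
  moreover have "{x \<in> space M. x \<notin> msupp M} \<subseteq> \<Union>F'"
  proof
    fix x assume "x \<in> {x \<in> space M. x \<notin> msupp M}"
    then obtain e where "0 < e" "emeasure M (ball x e) = 0"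
      unfolding msupp_def by (auto simp: not_less)
    then have "ball x e \<in> F" unfolding F_def by blast
    then have "x \<in> \<Union>F" using \<open>0 < e\<close> by (meson UnionI centre_in_ball)
    then show "x \<in> \<Union>F'" using F'(3) by simp
  qed
  ultimately show ?thesis by (intro AE_I') simp_all
qed

lemma AE_mem_if_msupp_subset:
  assumes "sets M = sets borel" and "msupp M \<subseteq> S"
  shows "AE x in M. x \<in> S"
  using AE_in_msupp[OF assms(1)] by eventually_elim (use assms(2) in blast)

lemma eq_on_nonneg_sym: "eq_on_nonneg M N \<Longrightarrow> eq_on_nonneg N M"
  by (simp add: eq_on_nonneg_def)

lemma nn_integral_nonneg_part_cong:
  assumes sM: "sets M = sets borel" and sN: "sets N = sets borel" and eq: "eq_on_nonneg M N"
    and f: "f \<in> borel_measurable borel"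
  shows "(\<integral>\<^sup>+x. f x * indicator {0..} x \<partial>M) = (\<integral>\<^sup>+x. f x * indicator {0..} x \<partial>N)"
proof -
  have as_density: "(\<integral>\<^sup>+x. f x * indicator {0..} x \<partial>L) = integral\<^sup>N (density L (indicator {0..})) f"
    if sL: "sets L = sets borel" for L :: "real measure"
    using f sL by (subst nn_integral_density) (auto simp: measurable_cong_sets[OF sL refl] mult.commute)
  have "density M (indicator {0..}) = density N (indicator {0..})"
  proof (rule measure_eqI)
    fix A assume "A \<in> sets (density M (indicator {0..}))"
    then have A: "A \<in> sets borel" using sM by simp
    have "emeasure (density M (indicator {0..})) A = emeasure M ({0..} \<inter> A)"
      using A sM by (intro emeasure_restricted) auto
    also have "\<dots> = emeasure N ({0..} \<inter> A)"
      using eq A unfolding eq_on_nonneg_def by auto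
    also have "\<dots> = emeasure (density N (indicator {0..})) A"
      using A sN by (intro emeasure_restricted[symmetric]) auto
    finally show "emeasure (density M (indicator {0..})) A = emeasure (density N (indicator {0..})) A" .
  qed (use sM sN in simp)
  then show ?thesis by (simp add: as_density sM sN)
qed

lemma nn_integral_nonneg_part_lattice:
  assumes mu: "real_prob \<mu>" and lattice: "AE x in \<mu>. x \<in> \<int>"
    and f: "f \<in> borel_measurable borel"
  shows "(\<integral>\<^sup>+x. f x * indicator {0..} x \<partial>\<mu>) = (\<Sum>n. ennreal (measure \<mu> {real n}) * f (real n))"
proof -
  interpret prob_space \<mu> using mu by (simp add: real_prob_def)
  have smu: "sets \<mu> = sets borel" using mu by (simp add: real_prob_def)
  have "(\<integral>\<^sup>+x. f x * indicator {0..} x \<partial>\<mu>) = (\<integral>\<^sup>+x. (\<Sum>n. f (real n) * indicator {real n} x) \<partial>\<mu>)"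
  proof (rule nn_integral_cong_AE)
    show "AE x in \<mu>. f x * indicator {0..} x = (\<Sum>n. f (real n) * indicator {real n} x)"
      using lattice
    proof eventually_elim
      case (elim x)
      show ?case
      proof (cases "x < 0")
        case False
        from elim obtain z :: int where "x = of_int z" by (auto elim: Ints_cases)
        with False obtain k :: nat where xk: "x = real k"
          by (metis not_less of_int_0_le_iff of_nat_nat)
        have "(\<Sum>n. f (real n) * indicator {real n} x) = (\<Sum>n. if n = k then f (real k) else 0)"
          by (intro suminf_cong) (auto simp: xk indicator_def)
        also have "\<dots> = f (real k)" using sums_unique[OF sums_single[of k "\<lambda>_. f (real k)"]] by simp
        finally show ?thesis using xk by simp
      qed (simp add: indicator_def)
    qed
  qed
  also have "\<dots> = (\<Sum>n. \<integral>\<^sup>+x. f (real n) * indicator {real n} x \<partial>\<mu>)"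
    by (rule nn_integral_suminf) (use smu in auto)
  also have "\<dots> = (\<Sum>n. ennreal (measure \<mu> {real n}) * f (real n))"
    using smu by (subst nn_integral_cmult_indicator) (auto simp: emeasure_eq_measure mult.commute)
  finally show ?thesis .
qed

lemma nn_integral_split_lattice:
  assumes mu: "real_prob \<mu>" and lattice: "AE x in \<mu>. x \<in> \<int>"
    and M: "real_prob M" and eq: "eq_on_nonneg M \<mu>"
    and f: "f \<in> borel_measurable borel"
  shows "(\<integral>\<^sup>+x. f x \<partial>M) = (\<Sum>n. ennreal (measure \<mu> {real n}) * f (real n))
           + (\<integral>\<^sup>+x. f x * indicator {..<0} x \<partial>M)"
proof -
  have smu: "sets \<mu> = sets borel" and sM: "sets M = sets borel"
    using mu M by (auto simp: real_prob_def)
  have "(\<integral>\<^sup>+x. f x \<partial>M) = (\<integral>\<^sup>+x. f x * indicator {0..} x + f x * indicator {..<0} x \<partial>M)"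
    by (intro nn_integral_cong) (auto simp: indicator_def)
  also have "\<dots> = (\<integral>\<^sup>+x. f x * indicator {0..} x \<partial>M) + (\<integral>\<^sup>+x. f x * indicator {..<0} x \<partial>M)"
    using f by (intro nn_integral_add) (auto simp: measurable_cong_sets[OF sM refl])
  also have "(\<integral>\<^sup>+x. f x * indicator {0..} x \<partial>M) = (\<Sum>n. ennreal (measure \<mu> {real n}) * f (real n))"
    by (simp add: nn_integral_nonneg_part_cong[OF sM smu eq f] nn_integral_nonneg_part_lattice[OF mu lattice f])
  finally show ?thesis .
qed

definition neg_translate :: "real set \<Rightarrow> nat \<Rightarrow> real set" where
  "neg_translate A j = (\<lambda>y. y + real j) -` A \<inter> {..<0}"

lemma neg_translate_borel [measurable]:
  "A \<in> sets borel \<Longrightarrow> neg_translate A j \<in> sets borel"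
  unfolding neg_translate_def by (intro sets.Int measurable_sets_borel[of "\<lambda>y. y + real j"]) auto

lemma disjoint_family_neg_translate:
  assumes "\<And>j. A j \<subseteq> {0..<1}"
  shows "disjoint_family (\<lambda>j. neg_translate (A j) j)"
proof (unfold disjoint_family_on_def, intro ballI impI)
  fix i j :: nat assume "i \<noteq> j"
  have False if "y \<in> neg_translate (A i) i" "y \<in> neg_translate (A j) j" for y
  proof -
    have "y + real i \<in> {0..<1}" "y + real j \<in> {0..<1}"
      using that assms[of i] assms[of j] by (auto simp: neg_translate_def)
    moreover have "real i + 1 \<le> real j \<or> real j + 1 \<le> real i" using \<open>i \<noteq> j\<close> by linarith
    ultimately show False by auto
  qed
  then show "neg_translate (A i) i \<inter> neg_translate (A j) j = {}" by blast
qed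

lemma nn_integral_neg_translates:
  assumes sM: "sets M = sets borel" and B: "B \<in> sets borel"
  shows "(\<integral>\<^sup>+y. (\<Sum>k. ennreal (q k) * indicator B (y + real k)) * indicator {..<0} y \<partial>M)
       = (\<Sum>k. ennreal (q k) * emeasure M (neg_translate B k))"
proof -
  have "(\<integral>\<^sup>+y. (\<Sum>k. ennreal (q k) * indicator B (y + real k)) * indicator {..<0} y \<partial>M)
      = (\<integral>\<^sup>+y. (\<Sum>k. ennreal (q k) * indicator (neg_translate B k) y) \<partial>M)"
  proof (rule nn_integral_cong)
    fix y :: real
    have "(\<Sum>k. ennreal (q k) * indicator B (y + real k)) * indicator {..<0} y
        = (\<Sum>k. ennreal (q k) * indicator B (y + real k) * indicator {..<0} y)"
      by (simp only: ennreal_suminf_multc)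
    also have "\<dots> = (\<Sum>k. ennreal (q k) * indicator (neg_translate B k) y)"
      unfolding neg_translate_def
      by (intro suminf_cong) (simp only: indicator_inter_arith indicator_vimage mult.assoc)
    finally show "(\<Sum>k. ennreal (q k) * indicator B (y + real k)) * indicator {..<0} y
        = (\<Sum>k. ennreal (q k) * indicator (neg_translate B k) y)" .
  qed
  also have "\<dots> = (\<Sum>k. \<integral>\<^sup>+y. ennreal (q k) * indicator (neg_translate B k) y \<partial>M)"
    by (rule nn_integral_suminf) (use B sM in simp)
  also have "\<dots> = (\<Sum>k. ennreal (q k) * emeasure M (neg_translate B k))"
    by (intro suminf_cong nn_integral_cmult_indicator) (use B sM in simp)
  finally show ?thesis .
qed

lemma summable_measure_nat_points:
  assumes "real_prob M"
  shows "summable (\<lambda>n. measure M {real n})"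
proof -
  interpret prob_space M using assms by (simp add: real_prob_def)
  have sM: "sets M = sets borel" using assms by (simp add: real_prob_def)
  have "range (\<lambda>n. {real n}) \<subseteq> sets M" unfolding sM by (intro image_subsetI borel_closed) simp
  moreover have "disjoint_family (\<lambda>n. {real n})" unfolding disjoint_family_on_def by simp
  ultimately show ?thesis by (rule sums_summable[OF finite_measure_UNION])
qed

lemma summable_mult_measure:
  assumes M: "real_prob M" and q0: "\<And>k. 0 \<le> q k" and qs: "summable q"
  shows "summable (\<lambda>k. q k * measure M (S k))"
proof (rule summable_comparison_test'[OF qs, of 0])
  interpret prob_space M using M by (simp add: real_prob_def)
  show "norm (q k * measure M (S k)) \<le> q k" for k
    using q0[of k] by (simp add: mult_left_le)
qed

lemma suminf_ennreal_mult_emeasure: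
  assumes M: "real_prob M" and q0: "\<And>k. 0 \<le> q k" and qs: "summable q"
  shows "(\<Sum>k. ennreal (q k) * emeasure M (S k)) = ennreal (\<Sum>k. q k * measure M (S k))"
proof -
  interpret prob_space M using M by (simp add: real_prob_def)
  have "(\<Sum>k. ennreal (q k) * emeasure M (S k)) = (\<Sum>k. ennreal (q k * measure M (S k)))"
    using q0 by (intro suminf_cong) (simp add: emeasure_eq_measure ennreal_mult)
  also have "\<dots> = ennreal (\<Sum>k. q k * measure M (S k))"
    by (rule suminf_ennreal2[OF _ summable_mult_measure[OF M q0 qs]]) (simp add: q0)
  finally show ?thesis .
qed

lemma emeasure_convolution_square_lattice:
  assumes mu: "real_prob \<mu>" and lattice: "AE x in \<mu>. x \<in> \<int>"
    and M: "real_prob M" and eq: "eq_on_nonneg M \<mu>"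
    and B: "B \<in> sets borel" and B0: "B \<subseteq> {0..}"
  shows "emeasure (M \<star> M) B =
     (\<Sum>k. ennreal (measure \<mu> {real k}) * (\<Sum>n. ennreal (measure \<mu> {real n}) * indicator B (real k + real n)))
     + 2 * ennreal (\<Sum>k. measure \<mu> {real k} * measure M (neg_translate B k))"
proof -
  let ?p = "\<lambda>n. ennreal (measure \<mu> {real n})"
  have sM: "sets M = sets borel" using M by (simp add: real_prob_def)
  interpret M: prob_space M using M by (simp add: real_prob_def)
  note split = nn_integral_split_lattice[OF mu lattice M eq]
  have [measurable]: "B \<in> sets borel" by (rule B)
  define a where "a x = (\<Sum>n. ?p n * indicator B (x + real n))" for x
  define b where "b x = (\<integral>\<^sup>+y. indicator B (x + y) * indicator {..<0} y \<partial>M)" for x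
  define R where "R = (\<Sum>k. ?p k * emeasure M (neg_translate B k))"
  have a_meas: "a \<in> borel_measurable borel" unfolding a_def by measurable
  have b_meas: "b \<in> borel_measurable borel"
  proof -
    have "(\<lambda>(x, y). indicator B (x + y) * indicator {..<0} y :: ennreal) \<in> borel_measurable (borel \<Otimes>\<^sub>M M)"
      unfolding measurable_cong_sets[OF sets_pair_measure_cong[OF refl sM] refl] by measurable
    then show ?thesis unfolding b_def using M.borel_measurable_nn_integral by simp
  qed
  have b_nat: "b (real k) = emeasure M (neg_translate B k)" for k
  proof -
    have "b (real k) = (\<integral>\<^sup>+y. indicator (neg_translate B k) y \<partial>M)" unfolding b_def
      by (intro nn_integral_cong) (simp add: neg_translate_def indicator_inter_arith indicator_vimage add.commute)
    then show ?thesis using B sM by simp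
  qed
  have b_neg: "b x * indicator {..<0} x = 0" for x
  proof (cases "x < 0")
    case True
    have "b x = (\<integral>\<^sup>+y. 0 \<partial>M)" unfolding b_def
      by (intro nn_integral_cong) (use True B0 in \<open>auto simp: indicator_def\<close>)
    then show ?thesis by simp
  qed simp
  have "emeasure (M \<star> M) B = (\<integral>\<^sup>+x. \<integral>\<^sup>+y. indicator B (x + y) \<partial>M \<partial>M)"
    using B sM by (intro convolution_emeasure') (auto intro: M.finite_measure)
  also have "\<dots> = (\<integral>\<^sup>+x. a x + b x \<partial>M)"
    unfolding a_def b_def by (subst split) simp_all
  also have "\<dots> = (\<integral>\<^sup>+x. a x \<partial>M) + (\<integral>\<^sup>+x. b x \<partial>M)"
    using a_meas b_meas by (intro nn_integral_add) (auto simp: measurable_cong_sets[OF sM refl])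
  also have "(\<integral>\<^sup>+x. a x \<partial>M) = (\<Sum>k. ?p k * a (real k)) + R"
    unfolding R_def by (subst split[OF a_meas]) (simp add: a_def nn_integral_neg_translates[OF sM B])
  also have "(\<integral>\<^sup>+x. b x \<partial>M) = R"
    unfolding R_def by (subst split[OF b_meas]) (simp add: b_neg b_nat)
  also have "R = ennreal (\<Sum>k. measure \<mu> {real k} * measure M (neg_translate B k))"
    unfolding R_def by (rule suminf_ennreal_mult_emeasure[OF M _ summable_measure_nat_points[OF mu]]) simp
  finally show ?thesis by (simp add: a_def mult_2 add.assoc)
qed

lemma suminf_lattice_mass_neg_translate_eq:
  assumes mu: "real_prob \<mu>" and lattice: "AE x in \<mu>. x \<in> \<int>"
    and mu1: "real_prob \<mu>1" and eq1: "eq_on_nonneg \<mu>1 \<mu>"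
    and eqc: "eq_on_nonneg (\<mu>1 \<star> \<mu>1) (\<mu> \<star> \<mu>)"
    and B: "B \<in> sets borel" and B0: "B \<subseteq> {0..}"
  shows "(\<Sum>k. measure \<mu> {real k} * measure \<mu>1 (neg_translate B k))
       = (\<Sum>k. measure \<mu> {real k} * measure \<mu> (neg_translate B k))"
proof -
  let ?p = "\<lambda>n. measure \<mu> {real n}"
  define S0 where "S0 = (\<Sum>k. ennreal (?p k) * (\<Sum>n. ennreal (?p n) * indicator B (real k + real n)))"
  define R where "R M = (\<Sum>k. ?p k * measure M (neg_translate B k))" for M
  have R0: "0 \<le> R M" if "real_prob M" for M
    unfolding R_def
    by (rule suminf_nonneg[OF summable_mult_measure[OF that _ summable_measure_nat_points[OF mu]]]) simp_all
  have conv: "emeasure (M \<star> M) B = S0 + 2 * ennreal (R M)" if "real_prob M" "eq_on_nonneg M \<mu>" for M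
    unfolding S0_def R_def by (rule emeasure_convolution_square_lattice[OF mu lattice that B B0])
  have "S0 + 2 * ennreal (R \<mu>1) = emeasure (\<mu>1 \<star> \<mu>1) B" by (rule conv[OF mu1 eq1, symmetric])
  also have "\<dots> = emeasure (\<mu> \<star> \<mu>) B" using eqc B B0 by (simp add: eq_on_nonneg_def)
  also have "\<dots> = S0 + 2 * ennreal (R \<mu>)" by (rule conv[OF mu]) (simp add: eq_on_nonneg_def)
  finally have "S0 + 2 * ennreal (R \<mu>1) = S0 + 2 * ennreal (R \<mu>)" .
  moreover have "S0 \<noteq> \<infinity>"
  proof -
    interpret prob_space \<mu> using mu by (simp add: real_prob_def)
    have "sets \<mu> = sets borel" using mu by (simp add: real_prob_def)
    then interpret conv: finite_measure "\<mu> \<star> \<mu>"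
      by (intro convolution_finite finite_measure) auto
    have "emeasure (\<mu> \<star> \<mu>) B \<noteq> \<infinity>" using conv.emeasure_finite[of B] by simp
    then show ?thesis using conv[OF mu] by (auto simp: eq_on_nonneg_def top_add)
  qed
  ultimately have "2 * ennreal (R \<mu>1) = 2 * ennreal (R \<mu>)" using ennreal_add_left_cancel by blast
  then have "ennreal (2 * R \<mu>1) = ennreal (2 * R \<mu>)" using R0[OF mu1] R0[OF mu] by (simp add: ennreal_mult)
  then show ?thesis using R0[OF mu1] R0[OF mu] unfolding R_def by (subst (asm) ennreal_inj) auto
qed

lemma sum_lattice_mass_neg_translate_diff_eq_0:
  assumes mu: "real_prob \<mu>" and lattice: "AE x in \<mu>. x \<in> \<int>"
    and mu1: "real_prob \<mu>1" and eq1: "eq_on_nonneg \<mu>1 \<mu>"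
    and eqc: "eq_on_nonneg (\<mu>1 \<star> \<mu>1) (\<mu> \<star> \<mu>)"
    and A: "A \<in> sets borel" and A01: "A \<subseteq> {0..<1}"
  shows "(\<Sum>j. measure \<mu> {real (j + m)} * (measure \<mu>1 (neg_translate A j) - measure \<mu> (neg_translate A j))) = 0"
proof -
  let ?p = "\<lambda>n. measure \<mu> {real n}"
  have p0: "\<And>n. 0 \<le> ?p n" by simp
  note ps = summable_measure_nat_points[OF mu]
  define B where "B = (\<lambda>x. x - real m) -` A"
  have B: "B \<in> sets borel" unfolding B_def by (rule measurable_sets_borel[OF _ A]) measurable
  have B0: "B \<subseteq> {0..}" using A01 by (auto simp: B_def)
  define f where "f k = ?p k * (measure \<mu>1 (neg_translate B k) - measure \<mu> (neg_translate B k))" for k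
  have f_sum: "(\<Sum>k. f k) = 0"
    using suminf_lattice_mass_neg_translate_eq[OF mu lattice mu1 eq1 eqc B B0]
      suminf_diff[OF summable_mult_measure[OF mu1 p0 ps, of "neg_translate B"]
        summable_mult_measure[OF mu p0 ps, of "neg_translate B"]]
    by (simp add: f_def right_diff_distrib)
  have f_summable: "summable f"
    unfolding f_def right_diff_distrib
    by (intro summable_diff summable_mult_measure[OF mu1 p0 ps] summable_mult_measure[OF mu p0 ps])
  have "f k = 0" if "k < m" for k
  proof -
    have "neg_translate B k = {}" using that A01 by (auto simp: neg_translate_def B_def)
    then show ?thesis by (simp add: f_def)
  qed
  then have "(\<Sum>j. f (j + m)) = 0"
    using suminf_minus_initial_segment[OF f_summable, of m] f_sum by simp
  moreover have "neg_translate B (j + m) = neg_translate A j" for j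
    by (auto simp: neg_translate_def B_def algebra_simps)
  ultimately show ?thesis by (simp add: f_def)
qed

lemma measure_eqI_nonneg_neg_translates:
  assumes sM: "sets M = sets borel" and sN: "sets N = sets borel"
    and nonneg: "eq_on_nonneg M N"
    and neg: "\<And>A j. A \<in> sets borel \<Longrightarrow> A \<subseteq> {0..<1} \<Longrightarrow>
                emeasure M (neg_translate A j) = emeasure N (neg_translate A j)"
  shows "M = N"
proof (rule measure_eqI)
  fix S assume "S \<in> sets M"
  then have S: "S \<in> sets borel" using sM by simp
  define A where "A j = (\<lambda>a. a - real j) -` S \<inter> {0..<1}" for j
  have A: "A j \<in> sets borel" for j
    unfolding A_def by (intro sets.Int measurable_sets_borel[OF _ S]) auto
  have S_neg: "S \<inter> {..<0} = (\<Union>j. neg_translate (A j) j)"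
  proof (intro equalityI subsetI)
    fix y assume y: "y \<in> S \<inter> {..<0}"
    define j where "j = nat (- \<lfloor>y\<rfloor>)"
    have "real j = - of_int \<lfloor>y\<rfloor>" using y by (simp add: j_def)
    then have "y + real j \<in> A j" using y by (simp add: A_def) linarith
    then show "y \<in> (\<Union>j. neg_translate (A j) j)" using y by (auto simp: neg_translate_def)
  qed (auto simp: neg_translate_def A_def)
  have disj: "disjoint_family (\<lambda>j. neg_translate (A j) j)"
    by (rule disjoint_family_neg_translate) (simp add: A_def)
  have "emeasure M (S \<inter> {..<0}) = (\<Sum>j. emeasure M (neg_translate (A j) j))"
    unfolding S_neg by (rule suminf_emeasure[symmetric]) (use A sM disj in auto)
  also have "\<dots> = (\<Sum>j. emeasure N (neg_translate (A j) j))"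
    using A by (simp add: neg A_def)
  also have "\<dots> = emeasure N (S \<inter> {..<0})"
    unfolding S_neg by (rule suminf_emeasure) (use A sN disj in auto)
  finally have "emeasure M (S \<inter> {..<0}) = emeasure N (S \<inter> {..<0})" .
  moreover have "emeasure M (S \<inter> {0..}) = emeasure N (S \<inter> {0..})"
    using nonneg S unfolding eq_on_nonneg_def by auto
  moreover have "emeasure L S = emeasure L (S \<inter> {0..}) + emeasure L (S \<inter> {..<0})"
    if "sets L = sets borel" for L :: "real measure"
    using S that by (subst plus_emeasure) (auto intro: arg_cong[where f = "emeasure L"])
  ultimately show "emeasure M S = emeasure N S" using sM sN by simp
qed (simp add: sM sN)

lemma summable_abs_measure_neg_translate_diff:
  assumes M: "real_prob M" and N: "real_prob N"
    and A: "A \<in> sets borel" and A01: "A \<subseteq> {0..<1}"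
  shows "summable (\<lambda>j. \<bar>measure M (neg_translate A j) - measure N (neg_translate A j)\<bar>)"
proof -
  have disj: "disjoint_family (neg_translate A)"
    using disjoint_family_neg_translate[of "\<lambda>_. A"] A01 by simp
  have summable: "summable (\<lambda>j. measure L (neg_translate A j))" if L: "real_prob L" for L
  proof -
    interpret prob_space L using L by (simp add: real_prob_def)
    have "sets L = sets borel" using L by (simp add: real_prob_def)
    then have "range (neg_translate A) \<subseteq> sets L" using A by (intro image_subsetI) simp
    from sums_summable[OF finite_measure_UNION[OF this disj]] show ?thesis .
  qed
  show ?thesis
  proof (rule summable_comparison_test'[OF summable_add[OF summable[OF M] summable[OF N]], where N = 0])
    show "norm \<bar>measure M (neg_translate A j) - measure N (neg_translate A j)\<bar>
        \<le> measure M (neg_translate A j) + measure N (neg_translate A j)" for j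
      using measure_nonneg[of M "neg_translate A j"] measure_nonneg[of N "neg_translate A j"]
      unfolding real_norm_def by arith
  qed
qed

lemma lattice_measure_unique:
  fixes \<mu> \<mu>1 \<nu> :: "real measure" and c :: "nat \<Rightarrow> real"
  assumes mu: "real_prob \<mu>" and lattice: "AE x in \<mu>. x \<in> \<int>"
    and mu1: "real_prob \<mu>1" and eq1: "eq_on_nonneg \<mu>1 \<mu>"
    and eqc: "eq_on_nonneg (\<mu>1 \<star> \<mu>1) (\<mu> \<star> \<mu>)"
    and nu_fin: "finite_measure \<nu>" and nu_sets: "sets \<nu> = sets borel"
    and nu_unit: "AE t in \<nu>. t \<in> {0..1}"
    and nu_mom: "\<And>n. measure \<mu> {real n} = (\<integral>t. t ^ n \<partial>\<nu>)"
    and c_supp: "\<And>n. c n \<in> msupp \<nu>" and c_dec: "\<And>n. c (Suc n) < c n"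
    and c_pos: "\<And>n. 0 < c n" and c_lt1: "\<And>n. c n < 1"
  shows "\<mu>1 = \<mu>"
proof -
  interpret mu: prob_space \<mu> using mu by (simp add: real_prob_def)
  interpret mu1: prob_space \<mu>1 using mu1 by (simp add: real_prob_def)
  have smu: "sets \<mu> = sets borel" and smu1: "sets \<mu>1 = sets borel"
    using mu mu1 by (auto simp: real_prob_def)
  have "measure \<mu>1 (neg_translate A j) = measure \<mu> (neg_translate A j)"
    if A: "A \<in> sets borel" and A01: "A \<subseteq> {0..<1}" for A j
  proof -
    define D where "D j = measure \<mu>1 (neg_translate A j) - measure \<mu> (neg_translate A j)" for j
    have "summable (\<lambda>j. \<bar>D j\<bar>)"
      unfolding D_def by (rule summable_abs_measure_neg_translate_diff[OF mu1 mu A A01])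
    moreover have "(\<Sum>j. D j * (\<integral>t. t ^ (m + j) \<partial>\<nu>)) = 0" for m
    proof -
      have "(\<Sum>j. D j * (\<integral>t. t ^ (m + j) \<partial>\<nu>)) = (\<Sum>j. measure \<mu> {real (j + m)} * D j)"
        by (intro suminf_cong) (simp only: nu_mom add.commute[of m] mult.commute)
      also have "\<dots> = 0"
        using sum_lattice_mass_neg_translate_diff_eq_0[OF mu lattice mu1 eq1 eqc A A01, of m]
        unfolding D_def .
      finally show ?thesis .
    qed
    ultimately have "D j = 0"
      by (rule powser_coeffs_eq_0_if_moments_vanish[of \<nu> D c, OF nu_fin nu_sets nu_unit _ _ c_supp c_dec c_pos c_lt1])
    then show ?thesis by (simp add: D_def)
  qed
  then show ?thesis
    by (intro measure_eqI_nonneg_neg_translates[OF smu1 smu eq1])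
      (simp add: mu1.emeasure_eq_measure mu.emeasure_eq_measure)
qed

lemma classC_if_determined_by_square:
  assumes mu: "real_prob \<mu>"
    and det: "\<And>\<mu>1. real_prob \<mu>1 \<Longrightarrow> eq_on_nonneg \<mu>1 \<mu> \<Longrightarrow> eq_on_nonneg (\<mu>1 \<star> \<mu>1) (\<mu> \<star> \<mu>) \<Longrightarrow> \<mu>1 = \<mu>"
  shows "\<mu> \<in> classC"
  unfolding classC_def
proof (intro CollectI conjI allI impI mu)
  fix \<mu>1 assume \<mu>1: "real_prob \<mu>1 \<and> (\<forall>n\<ge>1. eq_on_nonneg (conv_pow \<mu>1 n) (conv_pow \<mu> n))"
  then have pow: "\<And>n. 1 \<le> n \<Longrightarrow> eq_on_nonneg (conv_pow \<mu>1 n) (conv_pow \<mu> n)" by blast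
  have "eq_on_nonneg \<mu>1 \<mu>" using pow[of 1] by simp
  moreover have "eq_on_nonneg (\<mu>1 \<star> \<mu>1) (\<mu> \<star> \<mu>)" using pow[of 2] by (simp add: numeral_2_eq_2)
  ultimately show "\<mu>1 = \<mu>" using det \<mu>1 by blast
qed

theorem theorem3p12:
  fixes \<mu> \<nu> :: "real measure" and c :: "nat \<Rightarrow> real"
  assumes mu: "real_prob \<mu>"
    and supp: "\<not> msupp \<mu> \<subseteq> {..<0}"
    and cm: "completely_monotone (\<lambda>n. measure \<mu> {real n})"
    and nu_sets: "sets \<nu> = sets borel"
    and nu_fin: "finite_measure \<nu>"
    and nu_on: "emeasure \<nu> (UNIV - {0..1}) = 0"
    and nu_mom: "\<And>n. measure \<mu> {real n} = (\<integral>t. t ^ n \<partial>\<nu>)"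
    and c_supp: "\<And>n. c n \<in> msupp \<nu>"
    and c_dec: "strict_mono_on UNIV (\<lambda>n. - c n)"
    and c_pos: "\<And>n. 0 < c n" and c_lt1: "\<And>n. c n < 1"
    and c_div: "\<not> summable (\<lambda>n. 1 / (- ln (c n)))"
  shows "(\<forall>\<mu>1. real_prob \<mu>1 \<and> eq_on_nonneg \<mu>1 \<mu> \<and> eq_on_nonneg (convolution \<mu>1 \<mu>1) (convolution \<mu> \<mu>)
            \<longrightarrow> (msupp \<mu>1 \<subseteq> \<int> \<longleftrightarrow> msupp \<mu> \<subseteq> \<int>))
       \<and> (msupp \<mu> \<subseteq> \<int> \<longrightarrow>
            (\<forall>\<mu>1. real_prob \<mu>1 \<and> eq_on_nonneg \<mu>1 \<mu> \<and> eq_on_nonneg (convolution \<mu>1 \<mu>1) (convolution \<mu> \<mu>)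
               \<longrightarrow> \<mu>1 = \<mu>)
            \<and> \<mu> \<in> classC)"
proof -
  have nu_unit: "AE t in \<nu>. t \<in> {0..1}"
    by (rule AE_I'[of "UNIV - {0..1}"]) (use nu_on nu_sets in \<open>auto simp: sets_eq_imp_space_eq\<close>)
  have c_dec': "c (Suc n) < c n" for n
    using strict_mono_onD[OF c_dec, of n "Suc n"] by simp
  have unique: "M1 = M"
    if M: "real_prob M" "msupp M \<subseteq> \<int>" "\<And>n. measure M {real n} = (\<integral>t. t ^ n \<partial>\<nu>)"
      and M1: "real_prob M1" "eq_on_nonneg M1 M" "eq_on_nonneg (M1 \<star> M1) (M \<star> M)" for M M1
  proof (rule lattice_measure_unique[of M M1 \<nu> c, OF M(1) _ M1 nu_fin nu_sets nu_unit M(3) c_supp c_dec' c_pos c_lt1])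
    show "AE x in M. x \<in> \<int>" using M(1,2) by (intro AE_mem_if_msupp_subset) (simp_all add: real_prob_def)
  qed
  have supp_iff: "msupp \<mu>1 \<subseteq> \<int> \<longleftrightarrow> msupp \<mu> \<subseteq> \<int>"
    if mu1: "real_prob \<mu>1" "eq_on_nonneg \<mu>1 \<mu>" "eq_on_nonneg (\<mu>1 \<star> \<mu>1) (\<mu> \<star> \<mu>)" for \<mu>1
  proof -
    have "emeasure \<mu>1 {real n} = emeasure \<mu> {real n}" for n
      using mu1(2) unfolding eq_on_nonneg_def by auto
    then have "measure \<mu>1 {real n} = (\<integral>t. t ^ n \<partial>\<nu>)" for n by (simp add: measure_def nu_mom[symmetric])
    from unique[OF mu1(1) _ this mu eq_on_nonneg_sym[OF mu1(2)] eq_on_nonneg_sym[OF mu1(3)]]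
      unique[OF mu _ nu_mom mu1]
    show ?thesis by blast
  qed
  have "\<mu>1 = \<mu>"
    if "msupp \<mu> \<subseteq> \<int>" "real_prob \<mu>1" "eq_on_nonneg \<mu>1 \<mu>" "eq_on_nonneg (\<mu>1 \<star> \<mu>1) (\<mu> \<star> \<mu>)" for \<mu>1
    by (rule unique[OF mu that(1) nu_mom that(2-4)])
  with supp_iff classC_if_determined_by_square[OF mu] show ?thesis by blast
qed

end
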